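(* Let $Q\subset\mathbb{R}^n$ be a compact controlled $\tau$-recurrent set for the control system $\dot x=f(x,u)$, for some finite $\tau\ge 0$, and suppose the $\tau$-completeness assumption holds and $L_\tau<\infty$. Then for every $x\in Q$ and every $u\in\mathcal{U}_r$ such that the trajectory $\xi(x,u,\cdot)$ is $(\tau,Q)$-recurrent, $$\sup_{t\in\mathbb{R}_{\ge 0}} d(\xi(x,u,t),Q)\;\le\; F_Q\,\tau\, e^{L_\tau\tau},$$ where $d(y,Q)=\min_{q\in Q}\|y-q\|$ and $F_Q=\sup_{x\in Q,\,u\in U}\|f(x,u)\|<\infty$.
   Context: Consider the control system $\dot x(t)=f(x(t),u(t))$ with $x(t)\in\mathbb{R}^n$, $f$ locally Lipschitz, and controls $u\in\mathcal{U}$, where $\mathcal{U}$ is a set of piecewise continuous functions $\mathbb{R}_{\ge0}\to U$ with $U\subset\mathbb{R}^m$ compact. $\xi(x,u,t)$ denotes the solution at time $t$ from initial state $x$ under control $u$. $\|\cdot\|$ is a fixed norm on $\mathbb{R}^n$. For $\varepsilon\ge0$ and compact $Q$, $N_\varepsilon(Q)=\{y:\exists x\in Q,\ \|x-y\|\le\varepsilon\}$. A set $Q$ is controlled $\tau$-recurrent if for every $x\in Q$ there is $u\in\mathcal{U}$ such that for every $t\ge0$ there exists $t'\in[t,t+\tau]$ with $\xi(x,u,t')\in Q$. For $\tau\ge0,\varepsilon\ge0,T\ge\tau$, compact $Q$, $x\in Q$, $u\in\mathcal U$, the trajectory $\xi(x,u,\cdot)$ is $(T,\varepsilon,\tau,Q)$-recurrent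 if for every $t\in[0,T-\tau]$ there exists $t'\in[t,t+\tau]$ with $\xi(x,u,t')\in N_\varepsilon(Q)$; "$(\tau,Q)$-recurrent" means $\varepsilon=0$ and $T=\infty$ (the condition holds for all $t\ge 0$). $\tau$-completeness assumption: for every $x\in Q$ and $u\in\mathcal U$, $\xi(x,u,\cdot)$ is defined on $[0,\tau]$ and is continuous in its first argument. $\mathcal{U}_r\subseteq\mathcal U$ is the set of controls $u$ for which there exists some $x\in Q$ with $\xi(x,u,\cdot)$ $(\tau,Q)$-recurrent. $R(Q,u,\tau)=\bigcup_{t\in[0,\tau],x\in Q}\xi(x,u,t)$, $R_r(Q,\tau)=\bigcup_{u\in\mathcal U_r}R(Q,u,\tau)$, and $$L_\tau=\max_{x_1,x_2\in \mathrm{cl}(\mathrm{co}(R_r(Q,\tau))),\,u\in U}\frac{\|f(x_1,u)-f(x_2,u)\|}{\|x_1-x_2\|}.$$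
   Formalization: The control set $\mathcal{U}$ is closed under time shifts: for every u in $\mathcal{U}$ and every s >= 0, the control t |-> u(t+s) also lies in $\mathcal{U}$. The statement above fails without it. *)

theory Defs
  imports "HOL-Analysis.Analysis"
begin

text \<open>State space: a finite-dimensional real normed space with an arbitrary norm
  (class heine_borel for normed spaces characterises finite dimension), i.e. R^n with a fixed norm.\<close>

definition loc_lipschitz_xu :: "('a::real_normed_vector \<Rightarrow> 'b::real_normed_vector \<Rightarrow> 'a) \<Rightarrow> bool" where
  "loc_lipschitz_xu f \<longleftrightarrow>
     (\<forall>x0 u0. \<exists>r>0. \<exists>K. \<forall>x1 x2 u1 u2.
        x1 \<in> cball x0 r \<longrightarrow> x2 \<in> cball x0 r \<longrightarrow> u1 \<in> cball u0 r \<longrightarrow> u2 \<in> cball u0 r \<longrightarrow>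
        norm (f x1 u1 - f x2 u2) \<le> K * (norm (x1 - x2) + norm (u1 - u2)))"

definition piecewise_cont :: "(real \<Rightarrow> 'b::real_normed_vector) \<Rightarrow> bool" where
  "piecewise_cont u \<longleftrightarrow>
     (\<forall>T\<ge>0. \<exists>S. finite S \<and>
        (\<forall>t\<in>{0..T} - S. continuous (at t within {0..}) u) \<and>
        (\<forall>s\<in>S. (\<exists>l. (u \<longlongrightarrow> l) (at_right s)) \<and> (0 < s \<longrightarrow> (\<exists>l. (u \<longlongrightarrow> l) (at_left s)))))"

text \<open>phi is a (Caratheodory) solution of x' = f(x,u) on [0,T] with phi(0)=x.\<close>
definition solves_on :: "('a::real_normed_vector \<Rightarrow> 'b \<Rightarrow> 'a) \<Rightarrow> (real \<Rightarrow> 'b) \<Rightarrow> 'a \<Rightarrow> (real \<Rightarrow> 'a) \<Rightarrow> real \<Rightarrow> bool" where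
  "solves_on f u x \<phi> T \<longleftrightarrow> 0 \<le> T \<and> continuous_on {0..T} \<phi> \<and>
     (\<forall>t\<in>{0..T}. ((\<lambda>s. f (\<phi> s) (u s)) has_integral (\<phi> t - x)) {0..t})"

definition traj_defined :: "('a::real_normed_vector \<Rightarrow> 'b \<Rightarrow> 'a) \<Rightarrow> 'a \<Rightarrow> (real \<Rightarrow> 'b) \<Rightarrow> real \<Rightarrow> bool" where
  "traj_defined f x u t \<longleftrightarrow> (\<exists>\<phi>. solves_on f u x \<phi> t)"

definition xi :: "('a::real_normed_vector \<Rightarrow> 'b \<Rightarrow> 'a) \<Rightarrow> 'a \<Rightarrow> (real \<Rightarrow> 'b) \<Rightarrow> real \<Rightarrow> 'a" where
  "xi f x u t = (THE y. \<exists>\<phi>. solves_on f u x \<phi> t \<and> \<phi> t = y)"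

definition controlled_recurrent :: "('a::real_normed_vector \<Rightarrow> 'b \<Rightarrow> 'a) \<Rightarrow> (real \<Rightarrow> 'b) set \<Rightarrow> real \<Rightarrow> 'a set \<Rightarrow> bool" where
  "controlled_recurrent f UU \<tau> Q \<longleftrightarrow>
     (\<forall>x\<in>Q. \<exists>u\<in>UU. \<forall>t\<ge>0. \<exists>t'\<in>{t..t+\<tau>}. traj_defined f x u t' \<and> xi f x u t' \<in> Q)"

text \<open>(\<tau>,Q)-recurrent trajectory (\<epsilon> = 0, T = \<infinity>).\<close>
definition traj_recurrent :: "('a::real_normed_vector \<Rightarrow> 'b \<Rightarrow> 'a) \<Rightarrow> real \<Rightarrow> 'a set \<Rightarrow> 'a \<Rightarrow> (real \<Rightarrow> 'b) \<Rightarrow> bool" where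
  "traj_recurrent f \<tau> Q x u \<longleftrightarrow>
     (\<forall>t\<ge>0. \<exists>t'\<in>{t..t+\<tau>}. traj_defined f x u t' \<and> xi f x u t' \<in> Q)"

definition tau_complete :: "('a::real_normed_vector \<Rightarrow> 'b \<Rightarrow> 'a) \<Rightarrow> (real \<Rightarrow> 'b) set \<Rightarrow> real \<Rightarrow> 'a set \<Rightarrow> bool" where
  "tau_complete f UU \<tau> Q \<longleftrightarrow>
     (\<forall>x\<in>Q. \<forall>u\<in>UU. traj_defined f x u \<tau>) \<and>
     (\<forall>u\<in>UU. \<forall>t\<in>{0..\<tau>}. continuous_on Q (\<lambda>x. xi f x u t))"

definition U_r :: "('a::real_normed_vector \<Rightarrow> 'b \<Rightarrow> 'a) \<Rightarrow> (real \<Rightarrow> 'b) set \<Rightarrow> real \<Rightarrow> 'a set \<Rightarrow> (real \<Rightarrow> 'b) set" where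
  "U_r f UU \<tau> Q = {u \<in> UU. \<exists>x\<in>Q. traj_recurrent f \<tau> Q x u}"

definition reach :: "('a::real_normed_vector \<Rightarrow> 'b \<Rightarrow> 'a) \<Rightarrow> 'a set \<Rightarrow> (real \<Rightarrow> 'b) \<Rightarrow> real \<Rightarrow> 'a set" where
  "reach f Q u \<tau> = {xi f x u t | x t. x \<in> Q \<and> t \<in> {0..\<tau>}}"

definition reach_r :: "('a::real_normed_vector \<Rightarrow> 'b \<Rightarrow> 'a) \<Rightarrow> (real \<Rightarrow> 'b) set \<Rightarrow> 'a set \<Rightarrow> real \<Rightarrow> 'a set" where
  "reach_r f UU Q \<tau> = (\<Union>u\<in>U_r f UU \<tau> Q. reach f Q u \<tau>)"

definition lip_quotients :: "('a::real_normed_vector \<Rightarrow> 'b \<Rightarrow> 'a) \<Rightarrow> 'b set \<Rightarrow> (real \<Rightarrow> 'b) set \<Rightarrow> 'a set \<Rightarrow> real \<Rightarrow> real set" where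
  "lip_quotients f U UU Q \<tau> =
     {norm (f x1 v - f x2 v) / norm (x1 - x2) | x1 x2 v.
        x1 \<in> closure (convex hull (reach_r f UU Q \<tau>)) \<and> x2 \<in> closure (convex hull (reach_r f UU Q \<tau>)) \<and>
        x1 \<noteq> x2 \<and> v \<in> U}"

text \<open>L_tau; value 0 when there are no pairs x1 \<noteq> x2 (all quotients are \<ge> 0).\<close>
definition L_tau :: "('a::real_normed_vector \<Rightarrow> 'b \<Rightarrow> 'a) \<Rightarrow> 'b set \<Rightarrow> (real \<Rightarrow> 'b) set \<Rightarrow> 'a set \<Rightarrow> real \<Rightarrow> real" where
  "L_tau f U UU Q \<tau> = Sup (insert 0 (lip_quotients f U UU Q \<tau>))"

definition F_Q :: "('a::real_normed_vector \<Rightarrow> 'b \<Rightarrow> 'a) \<Rightarrow> 'b set \<Rightarrow> 'a set \<Rightarrow> real" where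
  "F_Q f U Q = Sup {norm (f x v) | x v. x \<in> Q \<and> v \<in> U}"

end

theory Submission
  imports Defs
begin

text \<open>Fix \<open>t \<ge> 0\<close>. By recurrence the trajectory visited \<open>Q\<close> at some time \<open>s \<in> [t - \<tau>, t]\<close>, at a
  point \<open>q\<close>. Restarting at \<open>q\<close> with the shifted control gives again a recurrent trajectory, so the
  arc on \<open>[s, t]\<close> lies in \<open>R_r(Q,\<tau>)\<close>, where \<open>f\<close> is \<open>L_\<tau>\<close>-Lipschitz in the state. There
  \<open>\<parallel>f(\<xi>(r), u(r))\<parallel> \<le> F_Q + L_\<tau> \<parallel>\<xi>(r) - q\<parallel>\<close>, and Gronwall's inequality applied to the integral
  equation gives \<open>\<parallel>\<xi>(t) - q\<parallel> \<le> F_Q (t - s) exp (L_\<tau> (t - s)) \<le> F_Q \<tau> exp (L_\<tau> \<tau>)\<close>.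
  Gronwall's inequality also gives uniqueness of solutions, which makes \<open>\<xi>\<close> well defined.\<close>

lemma loc_lipschitz_xu_lipschitz_on_product:
  fixes f :: "'a::real_normed_vector \<Rightarrow> 'b::real_normed_vector \<Rightarrow> 'a"
  assumes "loc_lipschitz_xu f"
  obtains r K where "r > 0"
    "(2 * \<bar>K\<bar>)-lipschitz_on (cball x0 r \<times> cball u0 r) (\<lambda>z. f (fst z) (snd z))"
proof -
  obtain r K where "r > 0" and lip: "\<And>x1 x2 u1 u2. x1 \<in> cball x0 r \<Longrightarrow> x2 \<in> cball x0 r \<Longrightarrow>
      u1 \<in> cball u0 r \<Longrightarrow> u2 \<in> cball u0 r \<Longrightarrow>
      norm (f x1 u1 - f x2 u2) \<le> K * (norm (x1 - x2) + norm (u1 - u2))"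
    using assms unfolding loc_lipschitz_xu_def by blast
  have dist_le: "dist (f (fst z1) (snd z1)) (f (fst z2) (snd z2)) \<le> 2 * \<bar>K\<bar> * dist z1 z2"
    if "z1 \<in> cball x0 r \<times> cball u0 r" "z2 \<in> cball x0 r \<times> cball u0 r" for z1 z2
  proof -
    have "dist (f (fst z1) (snd z1)) (f (fst z2) (snd z2))
        \<le> \<bar>K\<bar> * (dist (fst z1) (fst z2) + dist (snd z1) (snd z2))"
      using lip[of "fst z1" "fst z2" "snd z1" "snd z2"] that
      by (auto simp: dist_norm mem_Times_iff intro: order_trans[OF _ mult_right_mono[OF abs_ge_self]])
    also have "\<dots> \<le> \<bar>K\<bar> * (2 * dist z1 z2)"
      using dist_fst_le[of z1 z2] dist_snd_le[of z1 z2] by (intro mult_left_mono) auto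
    finally show ?thesis by simp
  qed
  have "(2 * \<bar>K\<bar>)-lipschitz_on (cball x0 r \<times> cball u0 r) (\<lambda>z. f (fst z) (snd z))"
    by (rule lipschitz_onI) (use dist_le in auto)
  with \<open>r > 0\<close> show ?thesis by (rule that)
qed

lemma loc_lipschitz_xu_continuous_on:
  fixes f :: "'a::real_normed_vector \<Rightarrow> 'b::real_normed_vector \<Rightarrow> 'a"
  assumes "loc_lipschitz_xu f"
  shows "continuous_on S (\<lambda>z. f (fst z) (snd z))"
proof (intro continuous_at_imp_continuous_on ballI)
  fix z :: "'a \<times> 'b"
  obtain r K where "r > 0"
    and lip: "(2 * \<bar>K\<bar>)-lipschitz_on (cball (fst z) r \<times> cball (snd z) r) (\<lambda>z. f (fst z) (snd z))"
    using loc_lipschitz_xu_lipschitz_on_product[OF assms] by blast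
  have "ball (fst z) r \<times> ball (snd z) r \<subseteq> interior (cball (fst z) r \<times> cball (snd z) r)"
    by (intro interior_maximal open_Times) auto
  then have "z \<in> interior (cball (fst z) r \<times> cball (snd z) r)"
    using \<open>r > 0\<close> by (auto simp: mem_Times_iff)
  with lipschitz_on_continuous_on[OF lip] show "isCont (\<lambda>z. f (fst z) (snd z)) z"
    by (rule continuous_on_interior)
qed

lemma loc_lipschitz_xu_lipschitz_on_compact:
  fixes f :: "'a::real_normed_vector \<Rightarrow> 'b::real_normed_vector \<Rightarrow> 'a"
  assumes "loc_lipschitz_xu f" "compact K" "compact U"
  obtains L where "\<And>v. v \<in> U \<Longrightarrow> L-lipschitz_on K (\<lambda>y. f y v)"
proof (rule local_lipschitz_compact_implies_lipschitz[of U K "\<lambda>v y. f y v"])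
  show "local_lipschitz U K (\<lambda>v y. f y v)"
  proof (rule local_lipschitzI)
    fix v y
    obtain r M where "r > 0"
      and lip: "(2 * \<bar>M\<bar>)-lipschitz_on (cball y r \<times> cball v r) (\<lambda>z. f (fst z) (snd z))"
      using loc_lipschitz_xu_lipschitz_on_product[OF assms(1)] by blast
    have "(2 * \<bar>M\<bar>)-lipschitz_on (cball y r \<inter> K) (\<lambda>y. f y v')" if "v' \<in> cball v r" for v'
      using that lipschitz_onD[OF lip, of "(_, v')" "(_, v')"] lipschitz_on_nonneg[OF lip]
      by (intro lipschitz_onI) (auto simp: dist_Pair_Pair dist_commute)
    with \<open>r > 0\<close> show "\<exists>r>0. \<exists>L. \<forall>v'\<in>cball v r \<inter> U. L-lipschitz_on (cball y r \<inter> K) (\<lambda>y. f y v')"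
      by blast
  qed
  show "continuous_on U (\<lambda>v. f y v)" for y
  proof -
    have "continuous_on U (\<lambda>v. (y, v))" by (intro continuous_intros)
    then show ?thesis
      using continuous_on_compose2[OF loc_lipschitz_xu_continuous_on[OF assms(1), of UNIV]] by fastforce
  qed
qed (use assms in auto)

lemma loc_lipschitz_xu_bdd_above_norm:
  fixes f :: "'a::real_normed_vector \<Rightarrow> 'b::real_normed_vector \<Rightarrow> 'a"
  assumes "loc_lipschitz_xu f" "compact Q" "compact U"
  shows "bdd_above {norm (f y v) | y v. y \<in> Q \<and> v \<in> U}"
proof -
  have "compact ((\<lambda>z. f (fst z) (snd z)) ` (Q \<times> U))"
    by (intro compact_continuous_image loc_lipschitz_xu_continuous_on assms compact_Times)
  then obtain B where "\<forall>z\<in>Q \<times> U. norm (f (fst z) (snd z)) \<le> B"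
    by (auto dest!: compact_imp_bounded simp: bounded_iff)
  then show ?thesis unfolding bdd_above_def by force
qed

lemma gronwall_integral:
  fixes g :: "real \<Rightarrow> real"
  assumes "a \<le> b" "continuous_on {a..b} g" "0 \<le> L"
    and hyp: "\<And>\<rho>. \<rho> \<in> {a..b} \<Longrightarrow> g \<rho> \<le> c + L * integral {a..\<rho>} g"
  shows "g b \<le> c * exp (L * (b - a))"
proof (cases "a = b")
  case True
  then show ?thesis using hyp[of b] by simp
next
  case False
  define I where "I = (\<lambda>\<rho>. integral {a..\<rho>} g)"
  \<comment> \<open>By the hypothesis \<open>K\<close> is non-increasing, and \<open>K a = c\<close>.\<close>
  define K where "K = (\<lambda>\<rho>. exp (- L * (\<rho> - a)) * (c + L * I \<rho>))"
  define D where "D = (\<lambda>\<rho>. exp (- L * (\<rho> - a)) * (- L) * (c + L * I \<rho>) + exp (- L * (\<rho> - a)) * (L * g \<rho>))"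
  have K_deriv: "(K has_derivative (\<lambda>h. h * D \<rho>)) (at \<rho> within {a..b})" if "a \<le> \<rho>" "\<rho> \<le> b" for \<rho>
  proof -
    have I_deriv: "(I has_real_derivative g \<rho>) (at \<rho> within {a..b})"
      unfolding I_def has_real_derivative_iff_has_vector_derivative
      using integral_has_vector_derivative[OF assms(2)] that by simp
    have "(K has_real_derivative D \<rho>) (at \<rho> within {a..b})"
      unfolding K_def D_def by (rule derivative_eq_intros refl I_deriv | simp)+
    then show ?thesis by (simp add: has_field_derivative_def mult_commute_abs)
  qed
  have "a < b" using \<open>a \<le> b\<close> False by simp
  then obtain \<rho> where \<rho>: "\<rho> \<in> {a<..<b}" "K b - K a = (b - a) * D \<rho>"
    using mvt_simple[OF _ K_deriv] by auto
  have "D \<rho> = L * exp (- L * (\<rho> - a)) * (g \<rho> - (c + L * I \<rho>))"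
    unfolding D_def by (simp add: algebra_simps)
  also have "\<dots> \<le> 0"
    using hyp[of \<rho>] \<rho>(1) \<open>0 \<le> L\<close> unfolding I_def by (intro mult_nonneg_nonpos) auto
  finally have "(b - a) * D \<rho> \<le> 0" using \<open>a \<le> b\<close> by (simp add: mult_nonneg_nonpos)
  then have "K b \<le> K a" using \<rho>(2) by simp
  then have K_b: "exp (- L * (b - a)) * (c + L * I b) \<le> c" by (simp add: K_def I_def)
  have "g b \<le> c + L * I b" using hyp[of b] \<open>a \<le> b\<close> by (simp add: I_def)
  also have "\<dots> = exp (L * (b - a)) * (exp (- L * (b - a)) * (c + L * I b))"
    by (simp add: exp_minus_inverse mult.assoc[symmetric])
  also have "\<dots> \<le> exp (L * (b - a)) * c"
    using K_b by (rule mult_left_mono) simp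
  finally show ?thesis by (simp add: mult.commute)
qed

lemma integral_equation_gronwall:
  fixes \<psi> G :: "real \<Rightarrow> 'a::banach"
  assumes "a \<le> b" "continuous_on {a..b} \<psi>" "0 \<le> c" "0 \<le> L"
    and \<psi>_eq: "\<And>\<rho>. \<rho> \<in> {a..b} \<Longrightarrow> (G has_integral (\<psi> \<rho> - \<psi> a)) {a..\<rho>}"
    and G_le: "\<And>r. r \<in> {a..b} \<Longrightarrow> norm (G r) \<le> c + L * norm (\<psi> r - \<psi> a)"
  shows "norm (\<psi> b - \<psi> a) \<le> c * (b - a) * exp (L * (b - a))"
proof (rule gronwall_integral[OF \<open>a \<le> b\<close> _ \<open>0 \<le> L\<close>])
  define g where "g = (\<lambda>r. norm (\<psi> r - \<psi> a))"
  have g_cont: "continuous_on {a..b} g"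
    unfolding g_def by (intro continuous_intros assms(2))
  then show "continuous_on {a..b} (\<lambda>r. norm (\<psi> r - \<psi> a))" by (simp add: g_def)
  fix \<rho> assume \<rho>: "\<rho> \<in> {a..b}"
  have "continuous_on {a..\<rho>} g"
    using \<rho> by (auto intro: continuous_on_subset[OF g_cont])
  then have bound_int: "((\<lambda>r. c + L * g r) has_integral (c * (\<rho> - a) + L * integral {a..\<rho>} g)) {a..\<rho>}"
    using \<rho> has_integral_const_real[of c a \<rho>]
    by (intro has_integral_add has_integral_mult_right integrable_integral integrable_continuous_interval)
      (auto simp: mult.commute)
  have "g \<rho> = norm (integral {a..\<rho>} G)"
    using integral_unique[OF \<psi>_eq[OF \<rho>]] by (simp add: g_def)
  also have "\<dots> \<le> integral {a..\<rho>} (\<lambda>r. c + L * g r)"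
    using \<rho> \<psi>_eq[OF \<rho>] bound_int G_le unfolding g_def
    by (intro integral_norm_bound_integral) (auto dest: has_integral_integrable)
  also have "\<dots> = c * (\<rho> - a) + L * integral {a..\<rho>} g"
    using integral_unique[OF bound_int] .
  also have "\<dots> \<le> c * (b - a) + L * integral {a..\<rho>} g"
    using \<rho> \<open>0 \<le> c\<close> by (simp add: mult_left_mono)
  finally show "norm (\<psi> \<rho> - \<psi> a) \<le> c * (b - a) + L * integral {a..\<rho>} (\<lambda>r. norm (\<psi> r - \<psi> a))"
    by (simp add: g_def)
qed

lemma solves_on_initial:
  fixes f :: "'a::banach \<Rightarrow> 'b \<Rightarrow> 'a"
  assumes "solves_on f w x \<phi> T"
  shows "\<phi> 0 = x"
proof -
  have sol: "\<forall>t\<in>{0..T}. ((\<lambda>s. f (\<phi> s) (w s)) has_integral (\<phi> t - x)) {0..t}"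
    and "0 \<le> T"
    using assms unfolding solves_on_def by simp_all
  then have "((\<lambda>s. f (\<phi> s) (w s)) has_integral (\<phi> 0 - x)) {0..0}"
    by (intro bspec[OF sol]) simp
  moreover have "((\<lambda>s. f (\<phi> s) (w s)) has_integral 0) {0..(0::real)}"
    using has_integral_refl(2)[of _ 0] by simp
  ultimately show ?thesis
    using has_integral_unique by (metis eq_iff_diff_eq_0)
qed

lemma solves_on_has_integral:
  fixes f :: "'a::banach \<Rightarrow> 'b \<Rightarrow> 'a"
  assumes "solves_on f w x \<phi> T" "0 \<le> a" "a \<le> b" "b \<le> T"
  shows "((\<lambda>r. f (\<phi> r) (w r)) has_integral (\<phi> b - \<phi> a)) {a..b}"
proof -
  let ?G = "\<lambda>r. f (\<phi> r) (w r)"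
  have hb: "(?G has_integral (\<phi> b - x)) {0..b}" and ha: "(?G has_integral (\<phi> a - x)) {0..a}"
    using assms unfolding solves_on_def by simp_all
  have "?G integrable_on {a..b}"
    using integrable_subinterval_real[OF has_integral_integrable[OF hb]] assms by auto
  moreover have "integral {0..a} ?G + integral {a..b} ?G = integral {0..b} ?G"
    using Henstock_Kurzweil_Integration.integral_combine[OF assms(2,3) has_integral_integrable[OF hb]] by simp
  then have "integral {a..b} ?G = \<phi> b - \<phi> a"
    using integral_unique[OF hb] integral_unique[OF ha] by (simp add: algebra_simps)
  ultimately show ?thesis using has_integral_integrable_integral by blast
qed

lemma solves_on_restrict:
  assumes "solves_on f w x \<phi> T" "0 \<le> t" "t \<le> T"
  shows "solves_on f w x \<phi> t"
  using assms unfolding solves_on_def by (auto intro: continuous_on_subset)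

lemma solves_on_shift:
  fixes f :: "'a::banach \<Rightarrow> 'b \<Rightarrow> 'a"
  assumes "solves_on f w x \<phi> T" "0 \<le> s" "s \<le> T"
  shows "solves_on f (\<lambda>r. w (r + s)) (\<phi> s) (\<lambda>r. \<phi> (r + s)) (T - s)"
  unfolding solves_on_def
proof (intro conjI ballI)
  show "0 \<le> T - s" using assms by simp
  have "continuous_on {0..T} \<phi>" using assms unfolding solves_on_def by simp
  moreover have "continuous_on {0..T - s} (\<lambda>r. r + s)" by (intro continuous_intros)
  moreover have "(\<lambda>r. r + s) ` {0..T - s} \<subseteq> {0..T}" using assms by auto
  ultimately show "continuous_on {0..T - s} (\<lambda>r. \<phi> (r + s))"
    using continuous_on_compose2[of "{0..T}" \<phi>] by blast
next
  fix t assume "t \<in> {0..T - s}"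
  then have "((\<lambda>r. f (\<phi> r) (w r)) has_integral (\<phi> (t + s) - \<phi> s)) (cbox s (t + s))"
    using solves_on_has_integral[OF assms(1), of s "t + s"] assms by simp
  from has_integral_affinity'[OF this, of 1 s]
  show "((\<lambda>r. f (\<phi> (r + s)) (w (r + s))) has_integral (\<phi> (t + s) - \<phi> s)) {0..t}"
    by simp
qed

lemma solves_on_displacement_le:
  fixes f :: "'a::banach \<Rightarrow> 'b \<Rightarrow> 'a"
  assumes sol: "solves_on f w x \<phi> T" and "0 \<le> s" "s \<le> t" "t \<le> T" "0 \<le> F" "0 \<le> L"
    and speed: "\<And>r. r \<in> {s..t} \<Longrightarrow> norm (f (\<phi> r) (w r)) \<le> F + L * norm (\<phi> r - \<phi> s)"
  shows "norm (\<phi> t - \<phi> s) \<le> F * (t - s) * exp (L * (t - s))"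
proof (rule integral_equation_gronwall[where G = "\<lambda>r. f (\<phi> r) (w r)"])
  show "continuous_on {s..t} \<phi>"
    using sol assms(2-4) unfolding solves_on_def by (auto intro: continuous_on_subset)
  show "((\<lambda>r. f (\<phi> r) (w r)) has_integral (\<phi> \<rho> - \<phi> s)) {s..\<rho>}" if "\<rho> \<in> {s..t}" for \<rho>
    using solves_on_has_integral[OF sol, of s \<rho>] that assms(2-4) by simp
qed (use assms in auto)

lemma solves_on_unique:
  fixes f :: "'a::{banach,heine_borel} \<Rightarrow> 'b::real_normed_vector \<Rightarrow> 'a"
  assumes "loc_lipschitz_xu f" "compact U" "\<forall>t\<ge>0. w t \<in> U"
    and sol1: "solves_on f w x \<phi>1 T" and sol2: "solves_on f w x \<phi>2 T" and "t \<in> {0..T}"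
  shows "\<phi>1 t = \<phi>2 t"
proof -
  have cont: "continuous_on {0..T} \<phi>1" "continuous_on {0..T} \<phi>2"
    using sol1 sol2 unfolding solves_on_def by simp_all
  then have "compact (\<phi>1 ` {0..T} \<union> \<phi>2 ` {0..T})"
    by (intro compact_Un compact_continuous_image) auto
  then obtain L where lip: "\<And>v. v \<in> U \<Longrightarrow> L-lipschitz_on (\<phi>1 ` {0..T} \<union> \<phi>2 ` {0..T}) (\<lambda>y. f y v)"
    using loc_lipschitz_xu_lipschitz_on_compact[OF assms(1) _ assms(2)] by blast
  have "0 \<le> L"
    using lip[of "w 0"] assms(3) lipschitz_on_nonneg by auto
  have "norm ((\<phi>1 t - \<phi>2 t) - (\<phi>1 0 - \<phi>2 0)) \<le> 0 * (t - 0) * exp (L * (t - 0))"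
  proof (rule integral_equation_gronwall[where G = "\<lambda>r. f (\<phi>1 r) (w r) - f (\<phi>2 r) (w r)"])
    show "continuous_on {0..t} (\<lambda>r. \<phi>1 r - \<phi>2 r)"
      using \<open>t \<in> {0..T}\<close> by (intro continuous_intros continuous_on_subset[OF cont(1)]
          continuous_on_subset[OF cont(2)]) auto
    fix \<rho> assume "\<rho> \<in> {0..t}"
    then have "\<rho> \<le> T" using \<open>t \<in> {0..T}\<close> by simp
    from has_integral_diff[OF solves_on_has_integral[OF sol1 _ _ this] solves_on_has_integral[OF sol2 _ _ this]]
    show "((\<lambda>r. f (\<phi>1 r) (w r) - f (\<phi>2 r) (w r)) has_integral
        (\<phi>1 \<rho> - \<phi>2 \<rho> - (\<phi>1 0 - \<phi>2 0))) {0..\<rho>}"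
      using \<open>\<rho> \<in> {0..t}\<close> by (simp add: algebra_simps)
  next
    fix r assume "r \<in> {0..t}"
    then show "norm (f (\<phi>1 r) (w r) - f (\<phi>2 r) (w r)) \<le> 0 + L * norm (\<phi>1 r - \<phi>2 r - (\<phi>1 0 - \<phi>2 0))"
      using \<open>t \<in> {0..T}\<close> assms(3) lipschitz_onD[OF lip, of "w r" "\<phi>1 r" "\<phi>2 r"]
        solves_on_initial[OF sol1] solves_on_initial[OF sol2]
      by (auto simp: dist_norm)
  qed (use \<open>t \<in> {0..T}\<close> \<open>0 \<le> L\<close> in auto)
  then show ?thesis
    using solves_on_initial[OF sol1] solves_on_initial[OF sol2] by simp
qed

lemma xi_eq_solution:
  fixes f :: "'a::{banach,heine_borel} \<Rightarrow> 'b::real_normed_vector \<Rightarrow> 'a"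
  assumes "loc_lipschitz_xu f" "compact U" "\<forall>t\<ge>0. w t \<in> U"
    and sol: "solves_on f w x \<phi> T" and "t \<in> {0..T}"
  shows "xi f x w t = \<phi> t"
  unfolding xi_def
proof (rule the_equality)
  have sol_t: "solves_on f w x \<phi> t" using solves_on_restrict[OF sol] \<open>t \<in> {0..T}\<close> by auto
  then show "\<exists>\<phi>'. solves_on f w x \<phi>' t \<and> \<phi>' t = \<phi> t" by blast
  fix y assume "\<exists>\<phi>'. solves_on f w x \<phi>' t \<and> \<phi>' t = y"
  then obtain \<phi>' where "solves_on f w x \<phi>' t" "\<phi>' t = y" by blast
  then show "y = \<phi> t"
    using solves_on_unique[OF assms(1-3) _ sol_t, of \<phi>' t] \<open>t \<in> {0..T}\<close> by auto
qed

lemma xi_zero: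
  fixes f :: "'a::banach \<Rightarrow> 'b \<Rightarrow> 'a"
  shows "xi f x w 0 = x"
  unfolding xi_def
proof (rule the_equality)
  have "solves_on f w x (\<lambda>_. x) 0"
    unfolding solves_on_def using has_integral_refl(2)[of _ 0] by simp
  then show "\<exists>\<phi>. solves_on f w x \<phi> 0 \<and> \<phi> 0 = x" by blast
next
  fix y assume "\<exists>\<phi>. solves_on f w x \<phi> 0 \<and> \<phi> 0 = y"
  then show "y = x" using solves_on_initial by blast
qed

lemma xi_shift:
  fixes f :: "'a::{banach,heine_borel} \<Rightarrow> 'b::real_normed_vector \<Rightarrow> 'a"
  assumes "loc_lipschitz_xu f" "compact U" "\<forall>t\<ge>0. w t \<in> U"
    and sol: "solves_on f w x \<phi> T" and "0 \<le> s" "s \<le> t" "t \<le> T"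
  shows "xi f (\<phi> s) (\<lambda>r. w (r + s)) (t - s) = \<phi> t"
proof -
  have "\<forall>r\<ge>0. w (r + s) \<in> U" using assms(3,5) by simp
  from xi_eq_solution[OF assms(1,2) this solves_on_shift[OF sol \<open>0 \<le> s\<close>], of "t - s"]
  show ?thesis using assms(5-7) by simp
qed

lemma traj_recurrent_recent_return:
  fixes f :: "'a::banach \<Rightarrow> 'b \<Rightarrow> 'a"
  assumes "traj_recurrent f \<tau> Q x w" "x \<in> Q" "0 \<le> t"
  obtains s where "0 \<le> s" "s \<le> t" "t - s \<le> \<tau>" "xi f x w s \<in> Q"
proof (cases "t \<le> \<tau>")
  case True
  show ?thesis
    by (rule that[of 0]) (use True assms in \<open>simp_all add: xi_zero\<close>)
next
  case False
  then obtain s where "s \<in> {t - \<tau>..t - \<tau> + \<tau>}" "xi f x w s \<in> Q"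
    using assms(1) False unfolding traj_recurrent_def by (metis diff_ge_0_iff_ge linear)
  then show ?thesis using that[of s] False by auto
qed

lemma traj_recurrent_shift:
  fixes f :: "'a::{banach,heine_borel} \<Rightarrow> 'b::real_normed_vector \<Rightarrow> 'a"
  assumes "loc_lipschitz_xu f" "compact U" "\<forall>t\<ge>0. w t \<in> U"
    and rec: "traj_recurrent f \<tau> Q x w" and "0 \<le> s"
  shows "traj_recurrent f \<tau> Q (xi f x w s) (\<lambda>r. w (r + s))"
  unfolding traj_recurrent_def
proof (intro allI impI)
  fix r :: real assume "0 \<le> r"
  then obtain t where t: "t \<in> {r + s..r + s + \<tau>}" "traj_defined f x w t" "xi f x w t \<in> Q"
    using rec \<open>0 \<le> r\<close> \<open>0 \<le> s\<close> unfolding traj_recurrent_def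
    by (metis add_nonneg_nonneg)
  then obtain \<phi> where sol: "solves_on f w x \<phi> t" unfolding traj_defined_def by blast
  have "s \<le> t" using t(1) \<open>0 \<le> r\<close> by simp
  then have xi_s: "xi f x w s = \<phi> s"
    using xi_eq_solution[OF assms(1-3) sol] \<open>0 \<le> s\<close> by simp
  have "traj_defined f (xi f x w s) (\<lambda>r. w (r + s)) (t - s)"
    unfolding traj_defined_def xi_s using solves_on_shift[OF sol \<open>0 \<le> s\<close> \<open>s \<le> t\<close>] by blast
  moreover have "xi f (xi f x w s) (\<lambda>r. w (r + s)) (t - s) \<in> Q"
    using xi_shift[OF assms(1-3) sol \<open>0 \<le> s\<close> \<open>s \<le> t\<close> order_refl] t(3)
      xi_eq_solution[OF assms(1-3) sol, of t] \<open>0 \<le> s\<close> \<open>s \<le> t\<close> by (simp add: xi_s)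
  moreover have "t - s \<in> {r..r + \<tau>}" using t(1) by auto
  ultimately show "\<exists>t'\<in>{r..r + \<tau>}. traj_defined f (xi f x w s) (\<lambda>r. w (r + s)) t' \<and>
      xi f (xi f x w s) (\<lambda>r. w (r + s)) t' \<in> Q" by blast
qed

lemma solution_in_reach_r:
  fixes f :: "'a::{banach,heine_borel} \<Rightarrow> 'b::real_normed_vector \<Rightarrow> 'a"
  assumes "loc_lipschitz_xu f" "compact U" "\<forall>w\<in>UU. \<forall>t\<ge>0. w t \<in> U"
    and UU_shift: "\<forall>w\<in>UU. \<forall>s\<ge>0. (\<lambda>t. w (t + s)) \<in> UU"
    and "u \<in> UU" "traj_recurrent f \<tau> Q x u"
    and sol: "solves_on f u x \<phi> T" and "0 \<le> s" "s \<le> \<rho>" "\<rho> \<le> T" "\<rho> - s \<le> \<tau>" "\<phi> s \<in> Q"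
  shows "\<phi> \<rho> \<in> reach_r f UU Q \<tau>"
proof -
  have uU: "\<forall>t\<ge>0. u t \<in> U" using assms(3,5) by blast
  have xi_s: "xi f x u s = \<phi> s"
    using xi_eq_solution[OF assms(1,2) uU sol] assms(8-10) by simp
  have "(\<lambda>r. u (r + s)) \<in> U_r f UU \<tau> Q"
    unfolding U_r_def using UU_shift \<open>u \<in> UU\<close> \<open>0 \<le> s\<close> \<open>\<phi> s \<in> Q\<close>
      traj_recurrent_shift[OF assms(1,2) uU assms(6) \<open>0 \<le> s\<close>] by (auto simp: xi_s)
  moreover have "\<phi> \<rho> \<in> reach f Q (\<lambda>r. u (r + s)) \<tau>"
    unfolding reach_def using xi_shift[OF assms(1,2) uU sol \<open>0 \<le> s\<close> \<open>s \<le> \<rho>\<close> \<open>\<rho> \<le> T\<close>]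
      assms(8-12) by (auto intro!: exI[of _ "\<phi> s"] exI[of _ "\<rho> - s"])
  ultimately show ?thesis unfolding reach_r_def by blast
qed

lemma norm_le_F_Q:
  assumes "bdd_above {norm (f y v) | y v. y \<in> Q \<and> v \<in> U}" "y \<in> Q" "v \<in> U"
  shows "norm (f y v) \<le> F_Q f U Q"
  unfolding F_Q_def using assms by (intro cSup_upper) blast+

lemma L_tau_nonneg:
  assumes "bdd_above (lip_quotients f U UU Q \<tau>)"
  shows "0 \<le> L_tau f U UU Q \<tau>"
  unfolding L_tau_def using assms by (intro cSup_upper) auto

lemma norm_diff_le_L_tau:
  assumes "bdd_above (lip_quotients f U UU Q \<tau>)"
    and "y \<in> closure (convex hull (reach_r f UU Q \<tau>))" "z \<in> closure (convex hull (reach_r f UU Q \<tau>))"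
    and "v \<in> U"
  shows "norm (f y v - f z v) \<le> L_tau f U UU Q \<tau> * norm (y - z)"
proof (cases "y = z")
  case False
  then have "norm (f y v - f z v) / norm (y - z) \<in> lip_quotients f U UU Q \<tau>"
    unfolding lip_quotients_def using assms(2-4) by blast
  then have "norm (f y v - f z v) / norm (y - z) \<le> L_tau f U UU Q \<tau>"
    unfolding L_tau_def using assms(1) by (intro cSup_upper) auto
  then show ?thesis using False by (simp add: pos_divide_le_eq)
qed simp

lemma norm_le_F_Q_plus_L_tau:
  assumes "bdd_above {norm (f y v) | y v. y \<in> Q \<and> v \<in> U}" "bdd_above (lip_quotients f U UU Q \<tau>)"
    and "y \<in> reach_r f UU Q \<tau>" "q \<in> reach_r f UU Q \<tau>" "q \<in> Q" "v \<in> U"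
  shows "norm (f y v) \<le> F_Q f U Q + L_tau f U UU Q \<tau> * norm (y - q)"
proof -
  have "reach_r f UU Q \<tau> \<subseteq> closure (convex hull (reach_r f UU Q \<tau>))"
    using hull_subset closure_subset by (metis subset_trans)
  then have "norm (f y v - f q v) \<le> L_tau f U UU Q \<tau> * norm (y - q)"
    using norm_diff_le_L_tau[OF assms(2)] assms(3,4,6) by blast
  moreover have "norm (f y v) \<le> norm (f q v) + norm (f y v - f q v)"
    using norm_triangle_ineq[of "f q v" "f y v - f q v"] by simp
  ultimately show ?thesis using norm_le_F_Q[OF assms(1,5,6)] by linarith
qed

theorem lemma1:
  fixes f :: "'a::{banach,heine_borel} \<Rightarrow> 'b::euclidean_space \<Rightarrow> 'a"
    and U :: "'b set" and UU :: "(real \<Rightarrow> 'b) set"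
    and Q :: "'a set" and \<tau> :: real and x :: 'a and u :: "real \<Rightarrow> 'b"
  assumes f_lip: "loc_lipschitz_xu f"
    and U_compact: "compact U"
    and UU_pc: "\<forall>w\<in>UU. piecewise_cont w \<and> (\<forall>t\<ge>0. w t \<in> U)"
    and UU_shift: "\<forall>w\<in>UU. \<forall>s\<ge>0. (\<lambda>t. w (t + s)) \<in> UU"
    and Q_compact: "compact Q"
    and tau_nonneg: "0 \<le> \<tau>"
    and Q_rec: "controlled_recurrent f UU \<tau> Q"
    and complete: "tau_complete f UU \<tau> Q"
    and L_finite: "bdd_above (lip_quotients f U UU Q \<tau>)"
    and x_in: "x \<in> Q"
    and u_in: "u \<in> U_r f UU \<tau> Q"
    and traj_rec: "traj_recurrent f \<tau> Q x u"
  shows "bdd_above {norm (f y v) | y v. y \<in> Q \<and> v \<in> U} \<and>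
         (\<forall>t\<ge>0. infdist (xi f x u t) Q \<le> F_Q f U Q * \<tau> * exp (L_tau f U UU Q \<tau> * \<tau>))"
proof (intro conjI allI impI)
  show F_bdd: "bdd_above {norm (f y v) | y v. y \<in> Q \<and> v \<in> U}"
    using loc_lipschitz_xu_bdd_above_norm[OF f_lip Q_compact U_compact] .
  define F L where "F = F_Q f U Q" and "L = L_tau f U UU Q \<tau>"
  have UU_U: "\<forall>w\<in>UU. \<forall>t\<ge>0. w t \<in> U" and "u \<in> UU" using UU_pc u_in by (auto simp: U_r_def)
  then have "0 \<le> F"
    using norm_le_F_Q[OF F_bdd x_in, of "u 0"] unfolding F_def by (meson norm_ge_zero order_trans order_refl)
  have "0 \<le> L" using L_tau_nonneg[OF L_finite] unfolding L_def .
  fix t :: real assume "0 \<le> t"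
  then obtain s where s: "0 \<le> s" "s \<le> t" "t - s \<le> \<tau>" "xi f x u s \<in> Q"
    using traj_recurrent_recent_return[OF traj_rec x_in] by blast
  obtain T \<phi> where "t \<le> T" and sol: "solves_on f u x \<phi> T"
    using traj_rec \<open>0 \<le> t\<close> unfolding traj_recurrent_def traj_defined_def by fastforce
  have xi_\<phi>: "xi f x u r = \<phi> r" if "r \<in> {0..T}" for r
    using xi_eq_solution[OF f_lip U_compact _ sol that] UU_U \<open>u \<in> UU\<close> by blast
  have reach: "\<phi> r \<in> reach_r f UU Q \<tau>" if "r \<in> {s..t}" for r
    using solution_in_reach_r[OF f_lip U_compact UU_U UU_shift \<open>u \<in> UU\<close> traj_rec sol, of s r]
      that s \<open>t \<le> T\<close> xi_\<phi>[of s] by auto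
  have "norm (f (\<phi> r) (u r)) \<le> F + L * norm (\<phi> r - \<phi> s)" if "r \<in> {s..t}" for r
    using norm_le_F_Q_plus_L_tau[OF F_bdd L_finite reach[OF that] reach[of s]]
      that s UU_U \<open>u \<in> UU\<close> xi_\<phi>[of s] \<open>t \<le> T\<close> unfolding F_def L_def by auto
  then have "norm (\<phi> t - \<phi> s) \<le> F * (t - s) * exp (L * (t - s))"
    by (rule solves_on_displacement_le[OF sol s(1,2) \<open>t \<le> T\<close> \<open>0 \<le> F\<close> \<open>0 \<le> L\<close>])
  also have "\<dots> \<le> F * \<tau> * exp (L * \<tau>)"
    using s \<open>0 \<le> F\<close> \<open>0 \<le> L\<close> by (intro mult_mono mult_left_mono) (auto simp: mult_left_mono)
  finally have "norm (\<phi> t - \<phi> s) \<le> F * \<tau> * exp (L * \<tau>)" .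
  moreover have "infdist (xi f x u t) Q \<le> norm (\<phi> t - \<phi> s)"
    using infdist_le[OF s(4)] xi_\<phi>[of t] xi_\<phi>[of s] s \<open>t \<le> T\<close> by (simp add: dist_norm)
  ultimately show "infdist (xi f x u t) Q \<le> F_Q f U Q * \<tau> * exp (L_tau f U UU Q \<tau> * \<tau>)"
    unfolding F_def L_def by linarith
qed

end
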